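(* Consider unknown functions $\theta_1,\theta_2,\theta_3,\theta_4,\theta_1'$ of $(z,\tau)$ and unknown coefficient functions $\vartheta_2,\vartheta_3,\vartheta_4,\eta$ of $\tau$ alone, subject to the system (S$_z$) and (S$_\tau$) given in the context. This system is compatible (i.e. the mixed derivatives $\partial_\tau\partial_z$ and $\partial_z\partial_\tau$ of each of the five unknowns, computed via the system, agree) if and only if the coefficients satisfy $$\frac{d\vartheta_2}{d\tau}=\frac{i}{\pi}\Big\{\eta+\frac{\pi^2}{12}(\vartheta_3^4+\vartheta_4^4)\Big\}\vartheta_2,\quad \frac{d\vartheta_3}{d\tau}=\frac{i}{\pi}\Big\{\eta+\frac{\pi^2}{12}(\vartheta_3^4+\vartheta_4^4-3\mathbf{B}^4\vartheta_4^4)\Big\}\vartheta_3,$$ $$\frac{d\vartheta_4}{d\tau}=\frac{i}{\pi}\Big\{\eta+\frac{\pi^2}{12}(\vartheta_3^4+\vartheta_4^4-3\mathbf{A}^4\vartheta_3^4)\Big\}\vartheta_4,\quad \frac{d\eta}{d\tau}=\frac{i}{\pi}2\eta^2-\frac{\pi^3}{72}i\big\{\vartheta_3^8+(9\mathbf{A}^4\mathbf{B}^4-6\mathbf{A}^4-6\mathbf{B}^4+2)\vartheta_3^4\vartheta_4^4+\vartheta_4^8\big\},$$ where $\mathbf{A}^4,\mathbf{B}^4$ are defined by $\mathbf{A}^4\vartheta_3^2\theta_1^2=\vartheta_2^2\theta_4^2-\vartheta_4^2\theta_2^2$ and $\mathbf{B}^4\vartheta_4^2\theta_1^2=\vartheta_2^2\theta_3^2-\vartheta_3^2\theta_2^2$,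 and these are algebraic first integrals of the system: on its solutions $\partial_z\mathbf{A}=\partial_z\mathbf{B}=\partial_\tau\mathbf{A}=\partial_\tau\mathbf{B}=0$. The three functions $(\vartheta_3,\vartheta_4,\eta)$ are differentially closed under these equations.
   Context: Let $\Lambda_0=\eta+\frac{\pi^2}{12}(\vartheta_3^4+\vartheta_4^4)$. System (S$_z$): $\partial_z\theta_1=\theta_1'$; $\partial_z\theta_2=\frac{\theta_1'}{\theta_1}\theta_2-\pi\vartheta_2^2\frac{\theta_3\theta_4}{\theta_1}$; $\partial_z\theta_3=\frac{\theta_1'}{\theta_1}\theta_3-\pi\vartheta_3^2\frac{\theta_2\theta_4}{\theta_1}$; $\partial_z\theta_4=\frac{\theta_1'}{\theta_1}\theta_4-\pi\vartheta_4^2\frac{\theta_2\theta_3}{\theta_1}$; $\partial_z\theta_1'=\frac{\theta_1'^2}{\theta_1}-\pi^2\vartheta_3^2\vartheta_4^2\frac{\theta_2^2}{\theta_1}-4\Lambda_0\theta_1$. System (S$_\tau$): $\partial_\tau\theta_1=\frac{-i}{4\pi}\frac{\theta_1'^2}{\theta_1}+\frac{i\pi}{4}\vartheta_3^2\vartheta_4^2\frac{\theta_2^2}{\theta_1}+\frac i\pi\Lambda_0\theta_1$; $\partial_\tau\theta_2=\frac{-i}{4\pi}\frac{\theta_1'^2}{\theta_1^2}\theta_2+\frac i2\vartheta_2^2\theta_1'\frac{\theta_3\theta_4}{\theta_1^2}+\frac{i\pi}{4}(\vartheta_3^2\vartheta_4^2\theta_2^2-\vartheta_2^2\vartheta_4^2\theta_3^2-\vartheta_2^2\vartheta_3^2\theta_4^2)\frac{\theta_2}{\theta_1^2}+\frac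 i\pi\Lambda_0\theta_2$; $\partial_\tau\theta_3=\frac{-i}{4\pi}\frac{\theta_1'^2}{\theta_1^2}\theta_3+\frac i2\vartheta_3^2\theta_1'\frac{\theta_2\theta_4}{\theta_1^2}-\frac{i\pi}{4}\vartheta_2^2\vartheta_3^2\frac{\theta_4^2}{\theta_1^2}\theta_3+\frac i\pi\Lambda_0\theta_3$; $\partial_\tau\theta_4=\frac{-i}{4\pi}\frac{\theta_1'^2}{\theta_1^2}\theta_4+\frac i2\vartheta_4^2\theta_1'\frac{\theta_2\theta_3}{\theta_1^2}-\frac{i\pi}{4}\vartheta_2^2\vartheta_4^2\frac{\theta_3^2}{\theta_1^2}\theta_4+\frac i\pi\Lambda_0\theta_4$; $\partial_\tau\theta_1'=\frac{-i}{4\pi}\frac{\theta_1'^3}{\theta_1^2}+\frac{3i}{\pi}\{\frac{\pi^2}{4}\vartheta_3^2\vartheta_4^2\frac{\theta_2^2}{\theta_1^2}+\Lambda_0\}\theta_1'-\frac i2\pi^2\vartheta_2^2\vartheta_3^2\vartheta_4^2\frac{\theta_2\theta_3\theta_4}{\theta_1^2}$. *)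

theory Defs
  imports "HOL-Analysis.Analysis"
begin

text \<open>Pointwise (jet-level) formalization.
  A state x = (th1, th2, th3, th4, th1') collects the values of the five unknowns
  theta_1, theta_2, theta_3, theta_4, theta_1' at a point (z, tau);
  a coefficient tuple c = (v2, v3, v4, eta) collects the values of
  vartheta_2, vartheta_3, vartheta_4, eta at tau; w = (v2', v3', v4', eta')
  collects their tau-derivatives.\<close>

type_synonym st = "complex \<times> complex \<times> complex \<times> complex \<times> complex"
type_synonym co = "complex \<times> complex \<times> complex \<times> complex"

abbreviation pic :: complex where "pic \<equiv> complex_of_real pi"

definition Lam0 :: "co \<Rightarrow> complex" where
  "Lam0 c = (case c of (v2, v3, v4, e) \<Rightarrow> e + pic^2 / 12 * (v3^4 + v4^4))"

definition Zsys :: "co \<Rightarrow> st \<Rightarrow> st" where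
  "Zsys c x = (case c of (v2, v3, v4, e) \<Rightarrow> case x of (t1, t2, t3, t4, p) \<Rightarrow>
     (p,
      p / t1 * t2 - pic * v2^2 * (t3 * t4) / t1,
      p / t1 * t3 - pic * v3^2 * (t2 * t4) / t1,
      p / t1 * t4 - pic * v4^2 * (t2 * t3) / t1,
      p^2 / t1 - pic^2 * v3^2 * v4^2 * t2^2 / t1 - 4 * Lam0 c * t1))"

definition Tsys :: "co \<Rightarrow> st \<Rightarrow> st" where
  "Tsys c x = (case c of (v2, v3, v4, e) \<Rightarrow> case x of (t1, t2, t3, t4, p) \<Rightarrow>
     (- \<i> / (4 * pic) * p^2 / t1 + \<i> * pic / 4 * v3^2 * v4^2 * t2^2 / t1
        + \<i> / pic * Lam0 c * t1,
      - \<i> / (4 * pic) * p^2 / t1^2 * t2 + \<i> / 2 * v2^2 * p * (t3 * t4) / t1^2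
        + \<i> * pic / 4 * (v3^2 * v4^2 * t2^2 - v2^2 * v4^2 * t3^2 - v2^2 * v3^2 * t4^2) * t2 / t1^2
        + \<i> / pic * Lam0 c * t2,
      - \<i> / (4 * pic) * p^2 / t1^2 * t3 + \<i> / 2 * v3^2 * p * (t2 * t4) / t1^2
        - \<i> * pic / 4 * v2^2 * v3^2 * t4^2 / t1^2 * t3 + \<i> / pic * Lam0 c * t3,
      - \<i> / (4 * pic) * p^2 / t1^2 * t4 + \<i> / 2 * v4^2 * p * (t2 * t3) / t1^2
        - \<i> * pic / 4 * v2^2 * v4^2 * t3^2 / t1^2 * t4 + \<i> / pic * Lam0 c * t4,
      - \<i> / (4 * pic) * p^3 / t1^2
        + 3 * \<i> / pic * (pic^2 / 4 * v3^2 * v4^2 * t2^2 / t1^2 + Lam0 c) * p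
        - \<i> / 2 * pic^2 * v2^2 * v3^2 * v4^2 * (t2 * t3 * t4) / t1^2))"

text \<open>Compatibility at a point: the mixed derivatives d_tau d_z and d_z d_tau of each
  of the five unknowns, computed via the system (chain rule along the flows), agree.
  d_tau (Zsys c x) = derivative of Zsys in direction (w, Tsys c x);
  d_z (Tsys c x)   = derivative of Tsys in direction (0, Zsys c x)
  (the coefficients do not depend on z).\<close>
definition compatible :: "co \<Rightarrow> co \<Rightarrow> st \<Rightarrow> bool" where
  "compatible c w x \<longleftrightarrow>
     vector_derivative (\<lambda>t::real. Zsys (c + t *\<^sub>R w) (x + t *\<^sub>R Tsys c x)) (at 0)
   = vector_derivative (\<lambda>t::real. Tsys c (x + t *\<^sub>R Zsys c x)) (at 0)"

definition A4 :: "co \<Rightarrow> st \<Rightarrow> complex" where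
  "A4 c x = (case c of (v2, v3, v4, e) \<Rightarrow> case x of (t1, t2, t3, t4, p) \<Rightarrow>
     (v2^2 * t4^2 - v4^2 * t2^2) / (v3^2 * t1^2))"

definition B4 :: "co \<Rightarrow> st \<Rightarrow> complex" where
  "B4 c x = (case c of (v2, v3, v4, e) \<Rightarrow> case x of (t1, t2, t3, t4, p) \<Rightarrow>
     (v2^2 * t3^2 - v3^2 * t2^2) / (v4^2 * t1^2))"

definition coef_rhs :: "co \<Rightarrow> st \<Rightarrow> co" where
  "coef_rhs c x = (case c of (v2, v3, v4, e) \<Rightarrow>
     (\<i> / pic * (e + pic^2 / 12 * (v3^4 + v4^4)) * v2,
      \<i> / pic * (e + pic^2 / 12 * (v3^4 + v4^4 - 3 * B4 c x * v4^4)) * v3,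
      \<i> / pic * (e + pic^2 / 12 * (v3^4 + v4^4 - 3 * A4 c x * v3^4)) * v4,
      \<i> / pic * 2 * e^2 - pic^3 / 72 * \<i> * (v3^8
         + (9 * A4 c x * B4 c x - 6 * A4 c x - 6 * B4 c x + 2) * v3^4 * v4^4 + v4^8)))"

end

theory Submission
  imports Defs
begin

text \<open>At a point, compatibility is an affine condition on the derivatives w of the
  coefficients: only the \<open>\<partial>\<^sub>\<tau>\<partial>\<^sub>z\<close> side involves w, and it determines w uniquely as soon
  as all theta- and vartheta-values are nonzero. Hence it suffices to check, by direct
  algebra, that the claimed right-hand sides make the two mixed derivatives agree.\<close>

text \<open>The constants \<open>\<pi>\<close> and \<open>\<i>\<close> enter the identities below only as formal symbols
  (no use is made of \<open>\<i>\<^sup>2 = -1\<close>), so they are replaced by arbitrary constants P and I;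
  this keeps the simplifier from rewriting \<open>of_real pi\<close> inside the algebra.\<close>

definition Lam0_gen :: "complex \<Rightarrow> co \<Rightarrow> complex" where
  "Lam0_gen P c = (case c of (v2, v3, v4, e) \<Rightarrow> e + P^2 / 12 * (v3^4 + v4^4))"

definition Zsys_gen :: "complex \<Rightarrow> co \<Rightarrow> st \<Rightarrow> st" where
  "Zsys_gen P c x = (case c of (v2, v3, v4, e) \<Rightarrow> case x of (t1, t2, t3, t4, p) \<Rightarrow>
     (p,
      p / t1 * t2 - P * v2^2 * (t3 * t4) / t1,
      p / t1 * t3 - P * v3^2 * (t2 * t4) / t1,
      p / t1 * t4 - P * v4^2 * (t2 * t3) / t1,
      p^2 / t1 - P^2 * v3^2 * v4^2 * t2^2 / t1 - 4 * Lam0_gen P c * t1))"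

definition Tsys_gen :: "complex \<Rightarrow> complex \<Rightarrow> co \<Rightarrow> st \<Rightarrow> st" where
  "Tsys_gen P I c x = (case c of (v2, v3, v4, e) \<Rightarrow> case x of (t1, t2, t3, t4, p) \<Rightarrow>
     (- I / (4 * P) * p^2 / t1 + I * P / 4 * v3^2 * v4^2 * t2^2 / t1
        + I / P * Lam0_gen P c * t1,
      - I / (4 * P) * p^2 / t1^2 * t2 + I / 2 * v2^2 * p * (t3 * t4) / t1^2
        + I * P / 4 * (v3^2 * v4^2 * t2^2 - v2^2 * v4^2 * t3^2 - v2^2 * v3^2 * t4^2) * t2 / t1^2
        + I / P * Lam0_gen P c * t2,
      - I / (4 * P) * p^2 / t1^2 * t3 + I / 2 * v3^2 * p * (t2 * t4) / t1^2
        - I * P / 4 * v2^2 * v3^2 * t4^2 / t1^2 * t3 + I / P * Lam0_gen P c * t3,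
      - I / (4 * P) * p^2 / t1^2 * t4 + I / 2 * v4^2 * p * (t2 * t3) / t1^2
        - I * P / 4 * v2^2 * v4^2 * t3^2 / t1^2 * t4 + I / P * Lam0_gen P c * t4,
      - I / (4 * P) * p^3 / t1^2
        + 3 * I / P * (P^2 / 4 * v3^2 * v4^2 * t2^2 / t1^2 + Lam0_gen P c) * p
        - I / 2 * P^2 * v2^2 * v3^2 * v4^2 * (t2 * t3 * t4) / t1^2))"

definition coef_rhs_gen :: "complex \<Rightarrow> complex \<Rightarrow> co \<Rightarrow> st \<Rightarrow> co" where
  "coef_rhs_gen P I c x = (case c of (v2, v3, v4, e) \<Rightarrow>
     (I / P * (e + P^2 / 12 * (v3^4 + v4^4)) * v2,
      I / P * (e + P^2 / 12 * (v3^4 + v4^4 - 3 * B4 c x * v4^4)) * v3,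
      I / P * (e + P^2 / 12 * (v3^4 + v4^4 - 3 * A4 c x * v3^4)) * v4,
      I / P * 2 * e^2 - P^3 / 72 * I * (v3^8
         + (9 * A4 c x * B4 c x - 6 * A4 c x - 6 * B4 c x + 2) * v3^4 * v4^4 + v4^8)))"

lemma pic_neq_0: "pic \<noteq> 0"
  by simp

lemma Zsys_eq_Zsys_gen: "Zsys = Zsys_gen pic"
  by (intro ext) (simp add: Zsys_def Zsys_gen_def Lam0_def Lam0_gen_def split: prod.split)

lemma Tsys_eq_Tsys_gen: "Tsys = Tsys_gen pic \<i>"
  by (intro ext) (simp add: Tsys_def Tsys_gen_def Lam0_def Lam0_gen_def split: prod.split)

lemma coef_rhs_eq_coef_rhs_gen: "coef_rhs = coef_rhs_gen pic \<i>"
  by (intro ext) (simp add: coef_rhs_def coef_rhs_gen_def split: prod.split)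

definition Lam0_gen_deriv :: "complex \<Rightarrow> co \<Rightarrow> co \<Rightarrow> complex" where
  "Lam0_gen_deriv P c w = (case c of (v2, v3, v4, e) \<Rightarrow> case w of (a2, a3, a4, ae) \<Rightarrow>
      ae + P^2/12 * (4 * v3^3 * a3 + 4 * v4^3 * a4))"

definition Zsys_gen_deriv :: "complex \<Rightarrow> co \<Rightarrow> co \<Rightarrow> st \<Rightarrow> st \<Rightarrow> st" where
  "Zsys_gen_deriv P c w x d = (case c of (v2, v3, v4, e) \<Rightarrow> case w of (a2, a3, a4, ae) \<Rightarrow>
     case x of (t1, t2, t3, t4, p) \<Rightarrow> case d of (d1, d2, d3, d4, dp) \<Rightarrow>
   (dp,
    (dp*t2 + p*d2)/t1 - p*t2*d1/t1^2 - P*(2 * v2*a2*t3*t4 + v2^2*(d3*t4 + t3*d4))/t1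
      + P * v2^2*t3*t4*d1/t1^2,
    (dp*t3 + p*d3)/t1 - p*t3*d1/t1^2 - P*(2 * v3*a3*t2*t4 + v3^2*(d2*t4 + t2*d4))/t1
      + P * v3^2*t2*t4*d1/t1^2,
    (dp*t4 + p*d4)/t1 - p*t4*d1/t1^2 - P*(2 * v4*a4*t2*t3 + v4^2*(d2*t3 + t2*d3))/t1
      + P * v4^2*t2*t3*d1/t1^2,
    2*p*dp/t1 - p^2*d1/t1^2 - P^2*(2 * v3*a3 * v4^2*t2^2 + 2 * v3^2 * v4*a4*t2^2 + 2 * v3^2 * v4^2*t2*d2)/t1
      + P^2 * v3^2 * v4^2*t2^2*d1/t1^2 - 4*(Lam0_gen_deriv P c w * t1 + Lam0_gen P c * d1)))"

definition Tsys_gen_deriv :: "complex \<Rightarrow> complex \<Rightarrow> co \<Rightarrow> st \<Rightarrow> st \<Rightarrow> st" where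
  "Tsys_gen_deriv P I c x d = (case c of (v2, v3, v4, e) \<Rightarrow>
     case x of (t1, t2, t3, t4, p) \<Rightarrow> case d of (d1, d2, d3, d4, dp) \<Rightarrow>
   (- I/(4*P)*(2*p*dp/t1 - p^2*d1/t1^2) + I*P/4 * v3^2 * v4^2*(2*t2*d2/t1 - t2^2*d1/t1^2)
      + I/P * Lam0_gen P c * d1,
    - I/(4*P)*((2*p*dp*t2 + p^2*d2)/t1^2 - 2*p^2*t2*d1/t1^3)
      + I/2 * v2^2*((dp*t3*t4 + p*d3*t4 + p*t3*d4)/t1^2 - 2*p*t3*t4*d1/t1^3)
      + I*P/4*(((2 * v3^2 * v4^2*t2*d2 - 2 * v2^2 * v4^2*t3*d3 - 2 * v2^2 * v3^2*t4*d4)*t2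
                + (v3^2 * v4^2*t2^2 - v2^2 * v4^2*t3^2 - v2^2 * v3^2*t4^2)*d2)/t1^2
               - 2*(v3^2 * v4^2*t2^2 - v2^2 * v4^2*t3^2 - v2^2 * v3^2*t4^2)*t2*d1/t1^3)
      + I/P * Lam0_gen P c * d2,
    - I/(4*P)*((2*p*dp*t3 + p^2*d3)/t1^2 - 2*p^2*t3*d1/t1^3)
      + I/2 * v3^2*((dp*t2*t4 + p*d2*t4 + p*t2*d4)/t1^2 - 2*p*t2*t4*d1/t1^3)
      - I*P/4 * v2^2 * v3^2*((2*t4*d4*t3 + t4^2*d3)/t1^2 - 2*t4^2*t3*d1/t1^3)
      + I/P * Lam0_gen P c * d3,
    - I/(4*P)*((2*p*dp*t4 + p^2*d4)/t1^2 - 2*p^2*t4*d1/t1^3)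
      + I/2 * v4^2*((dp*t2*t3 + p*d2*t3 + p*t2*d3)/t1^2 - 2*p*t2*t3*d1/t1^3)
      - I*P/4 * v2^2 * v4^2*((2*t3*d3*t4 + t3^2*d4)/t1^2 - 2*t3^2*t4*d1/t1^3)
      + I/P * Lam0_gen P c * d4,
    - I/(4*P)*(3*p^2*dp/t1^2 - 2*p^3*d1/t1^3)
      + 3*I/P*(P^2/4 * v3^2 * v4^2*(2*t2*d2/t1^2 - 2*t2^2*d1/t1^3))*p
      + 3*I/P*(P^2/4 * v3^2 * v4^2*t2^2/t1^2 + Lam0_gen P c)*dp
      - I/2*P^2 * v2^2 * v3^2 * v4^2*((d2*t3*t4 + t2*d3*t4 + t2*t3*d4)/t1^2 - 2*t2*t3*t4*d1/t1^3)))"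

definition A4_deriv :: "co \<Rightarrow> co \<Rightarrow> st \<Rightarrow> st \<Rightarrow> complex" where
  "A4_deriv c w x d = (case c of (v2, v3, v4, e) \<Rightarrow> case w of (a2, a3, a4, ae) \<Rightarrow>
     case x of (t1, t2, t3, t4, p) \<Rightarrow> case d of (d1, d2, d3, d4, dp) \<Rightarrow>
     ((2 * v2*a2*t4^2 + 2 * v2^2*t4*d4 - 2 * v4*a4*t2^2 - 2 * v4^2*t2*d2) * (v3^2*t1^2)
      - (v2^2*t4^2 - v4^2*t2^2) * (2 * v3*a3*t1^2 + 2 * v3^2*t1*d1)) / (v3^2*t1^2)^2)"

definition B4_deriv :: "co \<Rightarrow> co \<Rightarrow> st \<Rightarrow> st \<Rightarrow> complex" where
  "B4_deriv c w x d = (case c of (v2, v3, v4, e) \<Rightarrow> case w of (a2, a3, a4, ae) \<Rightarrow>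
     case x of (t1, t2, t3, t4, p) \<Rightarrow> case d of (d1, d2, d3, d4, dp) \<Rightarrow>
     ((2 * v2*a2*t3^2 + 2 * v2^2*t3*d3 - 2 * v3*a3*t2^2 - 2 * v3^2*t2*d2) * (v4^2*t1^2)
      - (v2^2*t3^2 - v3^2*t2^2) * (2 * v4*a4*t1^2 + 2 * v4^2*t1*d1)) / (v4^2*t1^2)^2)"

lemma has_vector_derivative_Zsys_gen:
  assumes "fst x \<noteq> 0"
  shows "((\<lambda>t::real. Zsys_gen P (c + t *\<^sub>R w) (x + t *\<^sub>R d))
           has_vector_derivative Zsys_gen_deriv P c w x d) (at 0)"
proof -
  obtain v2 v3 v4 e a2 a3 a4 ae t1 t2 t3 t4 p d1 d2 d3 d4 dp where
    defs: "c = (v2, v3, v4, e)" "w = (a2, a3, a4, ae)"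
      "x = (t1, t2, t3, t4, p)" "d = (d1, d2, d3, d4, dp)"
    by (metis prod.exhaust)
  with assms have "t1 \<noteq> 0" by simp
  then show ?thesis
    unfolding defs Zsys_gen_def Zsys_gen_deriv_def Lam0_gen_def Lam0_gen_deriv_def
    apply (simp add: scaleR_conv_of_real)
    apply (intro has_vector_derivative_Pair)
    by (rule has_vector_derivative_real_field; auto intro!: derivative_eq_intros;
        simp add: field_simps; algebra)+
qed

lemma has_vector_derivative_Tsys_gen:
  assumes "P \<noteq> 0" "fst x \<noteq> 0"
  shows "((\<lambda>t::real. Tsys_gen P I c (x + t *\<^sub>R d))
           has_vector_derivative Tsys_gen_deriv P I c x d) (at 0)"
proof -
  obtain v2 v3 v4 e t1 t2 t3 t4 p d1 d2 d3 d4 dp where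
    defs: "c = (v2, v3, v4, e)" "x = (t1, t2, t3, t4, p)" "d = (d1, d2, d3, d4, dp)"
    by (metis prod.exhaust)
  with assms have "P \<noteq> 0" "t1 \<noteq> 0" by simp_all
  then show ?thesis
    unfolding defs Tsys_gen_def Tsys_gen_deriv_def Lam0_gen_def
    apply (simp add: scaleR_conv_of_real)
    apply (intro has_vector_derivative_Pair)
    by (rule has_vector_derivative_real_field; auto intro!: derivative_eq_intros;
        simp add: field_simps; algebra)+
qed

lemma has_vector_derivative_A4:
  assumes "fst x \<noteq> 0" "fst (snd c) \<noteq> 0"
  shows "((\<lambda>t::real. A4 (c + t *\<^sub>R w) (x + t *\<^sub>R d)) has_vector_derivative A4_deriv c w x d) (at 0)"
proof -
  obtain v2 v3 v4 e a2 a3 a4 ae t1 t2 t3 t4 p d1 d2 d3 d4 dp where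
    defs: "c = (v2, v3, v4, e)" "w = (a2, a3, a4, ae)"
      "x = (t1, t2, t3, t4, p)" "d = (d1, d2, d3, d4, dp)"
    by (metis prod.exhaust)
  with assms have "t1 \<noteq> 0" "v3 \<noteq> 0" by simp_all
  then show ?thesis
    unfolding defs A4_def A4_deriv_def
    apply (simp add: scaleR_conv_of_real)
    by (rule has_vector_derivative_real_field; auto intro!: derivative_eq_intros;
        simp add: field_simps; algebra)
qed

lemma has_vector_derivative_B4:
  assumes "fst x \<noteq> 0" "fst (snd (snd c)) \<noteq> 0"
  shows "((\<lambda>t::real. B4 (c + t *\<^sub>R w) (x + t *\<^sub>R d)) has_vector_derivative B4_deriv c w x d) (at 0)"
proof -
  obtain v2 v3 v4 e a2 a3 a4 ae t1 t2 t3 t4 p d1 d2 d3 d4 dp where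
    defs: "c = (v2, v3, v4, e)" "w = (a2, a3, a4, ae)"
      "x = (t1, t2, t3, t4, p)" "d = (d1, d2, d3, d4, dp)"
    by (metis prod.exhaust)
  with assms have "t1 \<noteq> 0" "v4 \<noteq> 0" by simp_all
  then show ?thesis
    unfolding defs B4_def B4_deriv_def
    apply (simp add: scaleR_conv_of_real)
    by (rule has_vector_derivative_real_field; auto intro!: derivative_eq_intros;
        simp add: field_simps; algebra)
qed

lemma Zsys_gen_deriv_coef_rhs_gen:
  fixes v2 v3 v4 e t1 t2 t3 t4 p :: complex
  defines "c \<equiv> (v2, v3, v4, e)" and "x \<equiv> (t1, t2, t3, t4, p)"
  assumes "P \<noteq> 0" "t1 \<noteq> 0" "v3 \<noteq> 0" "v4 \<noteq> 0"
  shows "Zsys_gen_deriv P c (coef_rhs_gen P I c x) x (Tsys_gen P I c x)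
       = Tsys_gen_deriv P I c x (Zsys_gen P c x)"
  using assms(3-6)
  unfolding c_def x_def Zsys_gen_deriv_def Tsys_gen_deriv_def Zsys_gen_def Tsys_gen_def
    coef_rhs_gen_def A4_def B4_def Lam0_gen_def Lam0_gen_deriv_def
  apply (simp only: prod.case prod.inject)
  apply (intro conjI)
  by (simp add: field_simps; algebra)+

lemma Zsys_gen_deriv_inj_coef:
  fixes v2 v3 v4 e t1 t2 t3 t4 p :: complex
  defines "c \<equiv> (v2, v3, v4, e)" and "x \<equiv> (t1, t2, t3, t4, p)"
  assumes "P \<noteq> 0" "t1 \<noteq> 0" "t2 \<noteq> 0" "t3 \<noteq> 0" "t4 \<noteq> 0" "v2 \<noteq> 0" "v3 \<noteq> 0" "v4 \<noteq> 0"
    and eq: "Zsys_gen_deriv P c w x d = Zsys_gen_deriv P c w' x d"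
  shows "w = w'"
  using eq unfolding c_def x_def
  apply (cases w; cases w'; cases d)
  using assms(3-10)
  by (auto simp: Zsys_gen_deriv_def Lam0_gen_deriv_def field_simps)

lemma A4_deriv_Zsys_gen:
  fixes v2 v3 v4 e t1 t2 t3 t4 p :: complex
  defines "c \<equiv> (v2, v3, v4, e)" and "x \<equiv> (t1, t2, t3, t4, p)"
  assumes "t1 \<noteq> 0" "v3 \<noteq> 0"
  shows "A4_deriv c 0 x (Zsys_gen P c x) = 0"
  unfolding c_def x_def A4_deriv_def Zsys_gen_def zero_prod_def
  using assms(3-) by (simp add: field_simps) algebra

lemma B4_deriv_Zsys_gen:
  fixes v2 v3 v4 e t1 t2 t3 t4 p :: complex
  defines "c \<equiv> (v2, v3, v4, e)" and "x \<equiv> (t1, t2, t3, t4, p)"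
  assumes "t1 \<noteq> 0" "v4 \<noteq> 0"
  shows "B4_deriv c 0 x (Zsys_gen P c x) = 0"
  unfolding c_def x_def B4_deriv_def Zsys_gen_def zero_prod_def
  using assms(3-) by (simp add: field_simps) algebra

lemma A4_deriv_Tsys_gen:
  fixes v2 v3 v4 e t1 t2 t3 t4 p :: complex
  defines "c \<equiv> (v2, v3, v4, e)" and "x \<equiv> (t1, t2, t3, t4, p)"
  assumes "P \<noteq> 0" "t1 \<noteq> 0" "v3 \<noteq> 0" "v4 \<noteq> 0"
  shows "A4_deriv c (coef_rhs_gen P I c x) x (Tsys_gen P I c x) = 0"
  unfolding c_def x_def A4_deriv_def Tsys_gen_def coef_rhs_gen_def A4_def B4_def Lam0_gen_def
  using assms(3-) by (simp add: field_simps) algebra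

lemma B4_deriv_Tsys_gen:
  fixes v2 v3 v4 e t1 t2 t3 t4 p :: complex
  defines "c \<equiv> (v2, v3, v4, e)" and "x \<equiv> (t1, t2, t3, t4, p)"
  assumes "P \<noteq> 0" "t1 \<noteq> 0" "v3 \<noteq> 0" "v4 \<noteq> 0"
  shows "B4_deriv c (coef_rhs_gen P I c x) x (Tsys_gen P I c x) = 0"
  unfolding c_def x_def B4_deriv_def Tsys_gen_def coef_rhs_gen_def A4_def B4_def Lam0_gen_def
  using assms(3-) by (simp add: field_simps) algebra

lemma compatible_iff_Zsys_gen_deriv:
  assumes "fst x \<noteq> 0"
  shows "compatible c w x \<longleftrightarrow>
    Zsys_gen_deriv pic c w x (Tsys c x) = Tsys_gen_deriv pic \<i> c x (Zsys c x)"
proof -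
  note Z = has_vector_derivative_Zsys_gen[OF assms, of pic c w "Tsys c x"]
  note T = has_vector_derivative_Tsys_gen[OF pic_neq_0 assms, of \<i> c "Zsys c x"]
  show ?thesis
    unfolding compatible_def vector_derivative_at[OF Z[folded Zsys_eq_Zsys_gen]]
      vector_derivative_at[OF T[folded Tsys_eq_Tsys_gen Zsys_eq_Zsys_gen]] ..
qed

lemma compatible_iff_coef_rhs:
  fixes v2 v3 v4 e t1 t2 t3 t4 p :: complex
  defines "c \<equiv> (v2, v3, v4, e)" and "x \<equiv> (t1, t2, t3, t4, p)"
  assumes "t1 \<noteq> 0" "t2 \<noteq> 0" "t3 \<noteq> 0" "t4 \<noteq> 0" "v2 \<noteq> 0" "v3 \<noteq> 0" "v4 \<noteq> 0"
  shows "compatible c w x \<longleftrightarrow> w = coef_rhs c x"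
proof -
  have solution: "Zsys_gen_deriv pic c (coef_rhs c x) x (Tsys c x) = Tsys_gen_deriv pic \<i> c x (Zsys c x)"
    unfolding c_def x_def Zsys_eq_Zsys_gen Tsys_eq_Tsys_gen coef_rhs_eq_coef_rhs_gen
    using Zsys_gen_deriv_coef_rhs_gen pic_neq_0 assms(3,8,9) by blast
  have "compatible c w x \<longleftrightarrow>
      Zsys_gen_deriv pic c w x (Tsys c x) = Zsys_gen_deriv pic c (coef_rhs c x) x (Tsys c x)"
    using compatible_iff_Zsys_gen_deriv[of x c w] assms(3) solution by (simp add: x_def)
  also have "\<dots> \<longleftrightarrow> w = coef_rhs c x"
  proof
    assume "Zsys_gen_deriv pic c w x (Tsys c x) = Zsys_gen_deriv pic c (coef_rhs c x) x (Tsys c x)"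
    then show "w = coef_rhs c x"
      unfolding c_def x_def by (rule Zsys_gen_deriv_inj_coef[OF pic_neq_0 assms(3-9)])
  qed simp
  finally show ?thesis .
qed

lemma A4_Zsys_invariant:
  fixes v2 v3 v4 e t1 t2 t3 t4 p :: complex
  defines "c \<equiv> (v2, v3, v4, e)" and "x \<equiv> (t1, t2, t3, t4, p)"
  assumes "t1 \<noteq> 0" "v3 \<noteq> 0"
  shows "vector_derivative (\<lambda>t::real. A4 c (x + t *\<^sub>R Zsys c x)) (at 0) = 0"
  using vector_derivative_at[OF has_vector_derivative_A4[of x c 0 "Zsys c x"]]
    A4_deriv_Zsys_gen[OF assms(3,4)]
  by (simp add: c_def x_def Zsys_eq_Zsys_gen assms(3,4))

lemma B4_Zsys_invariant:
  fixes v2 v3 v4 e t1 t2 t3 t4 p :: complex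
  defines "c \<equiv> (v2, v3, v4, e)" and "x \<equiv> (t1, t2, t3, t4, p)"
  assumes "t1 \<noteq> 0" "v4 \<noteq> 0"
  shows "vector_derivative (\<lambda>t::real. B4 c (x + t *\<^sub>R Zsys c x)) (at 0) = 0"
  using vector_derivative_at[OF has_vector_derivative_B4[of x c 0 "Zsys c x"]]
    B4_deriv_Zsys_gen[OF assms(3,4)]
  by (simp add: c_def x_def Zsys_eq_Zsys_gen assms(3,4))

lemma A4_Tsys_invariant:
  fixes v2 v3 v4 e t1 t2 t3 t4 p :: complex
  defines "c \<equiv> (v2, v3, v4, e)" and "x \<equiv> (t1, t2, t3, t4, p)"
  assumes "t1 \<noteq> 0" "v3 \<noteq> 0" "v4 \<noteq> 0"
  shows "vector_derivative (\<lambda>t::real. A4 (c + t *\<^sub>R coef_rhs c x) (x + t *\<^sub>R Tsys c x)) (at 0) = 0"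
  using vector_derivative_at[OF has_vector_derivative_A4[of x c "coef_rhs c x" "Tsys c x"]]
    A4_deriv_Tsys_gen[OF pic_neq_0 assms(3-5)]
  by (simp add: c_def x_def Tsys_eq_Tsys_gen coef_rhs_eq_coef_rhs_gen assms(3,4))

lemma B4_Tsys_invariant:
  fixes v2 v3 v4 e t1 t2 t3 t4 p :: complex
  defines "c \<equiv> (v2, v3, v4, e)" and "x \<equiv> (t1, t2, t3, t4, p)"
  assumes "t1 \<noteq> 0" "v3 \<noteq> 0" "v4 \<noteq> 0"
  shows "vector_derivative (\<lambda>t::real. B4 (c + t *\<^sub>R coef_rhs c x) (x + t *\<^sub>R Tsys c x)) (at 0) = 0"
  using vector_derivative_at[OF has_vector_derivative_B4[of x c "coef_rhs c x" "Tsys c x"]]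
    B4_deriv_Tsys_gen[OF pic_neq_0 assms(3-5)]
  by (simp add: c_def x_def Tsys_eq_Tsys_gen coef_rhs_eq_coef_rhs_gen assms(3,5))

theorem theorem7p1:
  fixes v2 v3 v4 e :: complex
    and t1 t2 t3 t4 p :: complex
    and w :: co
  defines "c \<equiv> (v2, v3, v4, e)" and "x \<equiv> (t1, t2, t3, t4, p)"
  assumes "t1 \<noteq> 0" and "t2 \<noteq> 0" and "t3 \<noteq> 0" and "t4 \<noteq> 0"
    and "v2 \<noteq> 0" and "v3 \<noteq> 0" and "v4 \<noteq> 0"
  shows "(compatible c w x \<longleftrightarrow> w = coef_rhs c x)
       \<and> vector_derivative (\<lambda>t::real. A4 c (x + t *\<^sub>R Zsys c x)) (at 0) = 0
       \<and> vector_derivative (\<lambda>t::real. B4 c (x + t *\<^sub>R Zsys c x)) (at 0) = 0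
       \<and> (w = coef_rhs c x \<longrightarrow>
            vector_derivative (\<lambda>t::real. A4 (c + t *\<^sub>R w) (x + t *\<^sub>R Tsys c x)) (at 0) = 0
          \<and> vector_derivative (\<lambda>t::real. B4 (c + t *\<^sub>R w) (x + t *\<^sub>R Tsys c x)) (at 0) = 0)"
  using compatible_iff_coef_rhs[OF assms(3-9)]
    A4_Zsys_invariant[OF assms(3,8)] B4_Zsys_invariant[OF assms(3,9)]
    A4_Tsys_invariant[OF assms(3,8,9)] B4_Tsys_invariant[OF assms(3,8,9)]
  unfolding c_def x_def by simp

end
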